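(* Let a group $G$ act uniformly equicontinuously on a cofinite graph $\Gamma$, let $\{R\mid R\in I\}$ be a fundamental system of $G$-invariant compatible cofinite entourages of $\Gamma$, and give $G$ the uniformity with fundamental system $\{N_R\mid R\in I\}$. Then the action map $G\times\Gamma\to\Gamma$, $(g,x)\mapsto g\cdot x$, is uniformly continuous (with the product uniformity on $G\times\Gamma$).
   Context: A graph $\Gamma$ is a set $\Gamma=V(\Gamma)\sqcup E(\Gamma)$ with maps $s,t\colon E\to V$ and a fixed-point-free involution $e\mapsto\overline e$ with $s(\overline e)=t(e)$, $t(\overline e)=s(e)$. An equivalence relation $R$ on $\Gamma$ is compatible if $R\subseteq (V\times V)\cup(E\times E)$, $(e,e')\in R$ implies $(s(e),s(e')),(t(e),t(e')),(\overline e,\overline{e'})\in R$, and $(e,\overline e)\notin R$. A cofinite entourage is an entourage that is an equivalence relation with finitely many classes. A cofinite graph is a graph with a Hausdorff uniformity in which compatible cofinite entourages form a fundamental system. A group $G$ acts on $\Gamma$ if it acts on the set $\Gamma$ preserving vertices and edges, commuting with $s,t,\overline{\phantom e}$, and there is a $G$-invariant orientation. The action is uniformly equicontinuous if for each entourage $W$ there is an entourage $V$ with $(g\times g)[V]\subseteq W$ for all $g\in G$. $R$ is $G$-invariant if $(g\times g)[R]\subseteq R$ for all $g$. $N_R=\{(g,h)\in G\times G:(g\cdot x,h\cdot x)\in R\ \forall x\in\Gamma\}$; these are cofinite congruences on $G$ forming a fundamental system of a uniformity on $G$. *)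

theory Defs
  imports "HOL-Algebra.Group_Action"
begin

section \<open>Graphs (Serre-style), carrier X = V \<union> E, E = X - V\<close>

definition is_graph :: "'a set \<Rightarrow> 'a set \<Rightarrow> ('a \<Rightarrow> 'a) \<Rightarrow> ('a \<Rightarrow> 'a) \<Rightarrow> ('a \<Rightarrow> 'a) \<Rightarrow> bool" where
  "is_graph X V s t bar \<longleftrightarrow> V \<subseteq> X \<and>
     (\<forall>e\<in>X - V. s e \<in> V \<and> t e \<in> V \<and> bar e \<in> X - V \<and> bar e \<noteq> e \<and> bar (bar e) = e
                 \<and> s (bar e) = t e \<and> t (bar e) = s e)"

definition compatible :: "'a set \<Rightarrow> 'a set \<Rightarrow> ('a \<Rightarrow> 'a) \<Rightarrow> ('a \<Rightarrow> 'a) \<Rightarrow> ('a \<Rightarrow> 'a) \<Rightarrow> 'a rel \<Rightarrow> bool" where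
  "compatible X V s t bar R \<longleftrightarrow> equiv X R \<and>
     R \<subseteq> (V \<times> V) \<union> ((X - V) \<times> (X - V)) \<and>
     (\<forall>e e'. (e, e') \<in> R \<and> e \<in> X - V \<longrightarrow>
        (s e, s e') \<in> R \<and> (t e, t e') \<in> R \<and> (bar e, bar e') \<in> R) \<and>
     (\<forall>e\<in>X - V. (e, bar e) \<notin> R)"

definition uniformity_on :: "'a set \<Rightarrow> 'a rel set \<Rightarrow> bool" where
  "uniformity_on X U \<longleftrightarrow> U \<noteq> {} \<and>
     (\<forall>W\<in>U. W \<subseteq> X \<times> X \<and> Id_on X \<subseteq> W \<and> converse W \<in> U \<and> (\<exists>W'\<in>U. W' O W' \<subseteq> W)) \<and>
     (\<forall>W\<in>U. \<forall>W'. W \<subseteq> W' \<and> W' \<subseteq> X \<times> X \<longrightarrow> W' \<in> U) \<and>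
     (\<forall>W\<in>U. \<forall>W'\<in>U. W \<inter> W' \<in> U)"

definition hausdorff_uniformity :: "'a set \<Rightarrow> 'a rel set \<Rightarrow> bool" where
  "hausdorff_uniformity X U \<longleftrightarrow> uniformity_on X U \<and> \<Inter>U = Id_on X"

definition fundamental_system :: "'a rel set \<Rightarrow> 'a rel set \<Rightarrow> bool" where
  "fundamental_system U B \<longleftrightarrow> B \<subseteq> U \<and> (\<forall>W\<in>U. \<exists>W'\<in>B. W' \<subseteq> W)"

definition generated_uniformity :: "'a set \<Rightarrow> 'a rel set \<Rightarrow> 'a rel set" where
  "generated_uniformity X B = {W. W \<subseteq> X \<times> X \<and> (\<exists>W'\<in>B. W' \<subseteq> W)}"

definition cofinite_entourage :: "'a set \<Rightarrow> 'a rel set \<Rightarrow> 'a rel \<Rightarrow> bool" where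
  "cofinite_entourage X U R \<longleftrightarrow> R \<in> U \<and> equiv X R \<and> finite (X // R)"

definition cofinite_graph ::
  "'a set \<Rightarrow> 'a set \<Rightarrow> ('a \<Rightarrow> 'a) \<Rightarrow> ('a \<Rightarrow> 'a) \<Rightarrow> ('a \<Rightarrow> 'a) \<Rightarrow> 'a rel set \<Rightarrow> bool" where
  "cofinite_graph X V s t bar U \<longleftrightarrow> is_graph X V s t bar \<and> hausdorff_uniformity X U \<and>
     fundamental_system U {R. compatible X V s t bar R \<and> cofinite_entourage X U R}"

definition product_uniformity :: "('a \<times> 'a) set set \<Rightarrow> ('b \<times> 'b) set set \<Rightarrow> 'a set \<Rightarrow> 'b set
   \<Rightarrow> (('a \<times> 'b) \<times> ('a \<times> 'b)) set set" where
  "product_uniformity UA UB A B = generated_uniformity (A \<times> B)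
     {{((a, b), (a', b')). (a, a') \<in> WA \<and> (b, b') \<in> WB} | WA WB. WA \<in> UA \<and> WB \<in> UB}"

definition uniformly_continuous_map :: "'a set \<Rightarrow> 'a rel set \<Rightarrow> 'b set \<Rightarrow> 'b rel set \<Rightarrow> ('a \<Rightarrow> 'b) \<Rightarrow> bool" where
  "uniformly_continuous_map X UX Y UY f \<longleftrightarrow> f ` X \<subseteq> Y \<and>
     (\<forall>W\<in>UY. \<exists>W'\<in>UX. \<forall>(a, b)\<in>W'. (f a, f b) \<in> W)"

definition graph_action ::
  "('g, 'm) monoid_scheme \<Rightarrow> 'a set \<Rightarrow> 'a set \<Rightarrow> ('a \<Rightarrow> 'a) \<Rightarrow> ('a \<Rightarrow> 'a) \<Rightarrow> ('a \<Rightarrow> 'a)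
     \<Rightarrow> ('g \<Rightarrow> 'a \<Rightarrow> 'a) \<Rightarrow> bool" where
  "graph_action G X V s t bar act \<longleftrightarrow> group_action G X act \<and>
     (\<forall>g\<in>carrier G. \<forall>v\<in>V. act g v \<in> V) \<and>
     (\<forall>g\<in>carrier G. \<forall>e\<in>X - V. act g e \<in> X - V \<and> act g (s e) = s (act g e)
        \<and> act g (t e) = t (act g e) \<and> act g (bar e) = bar (act g e)) \<and>
     (\<exists>Or \<subseteq> X - V. (\<forall>e\<in>X - V. (e \<in> Or) \<noteq> (bar e \<in> Or)) \<and> (\<forall>g\<in>carrier G. \<forall>e\<in>Or. act g e \<in> Or))"

definition uniformly_equicontinuous ::
  "('g, 'm) monoid_scheme \<Rightarrow> 'a rel set \<Rightarrow> ('g \<Rightarrow> 'a \<Rightarrow> 'a) \<Rightarrow> bool" where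
  "uniformly_equicontinuous G U act \<longleftrightarrow>
     (\<forall>W\<in>U. \<exists>W'\<in>U. \<forall>g\<in>carrier G. (\<lambda>(x, y). (act g x, act g y)) ` W' \<subseteq> W)"

definition G_invariant :: "('g, 'm) monoid_scheme \<Rightarrow> ('g \<Rightarrow> 'a \<Rightarrow> 'a) \<Rightarrow> 'a rel \<Rightarrow> bool" where
  "G_invariant G act R \<longleftrightarrow> (\<forall>g\<in>carrier G. (\<lambda>(x, y). (act g x, act g y)) ` R \<subseteq> R)"

definition N_rel :: "('g, 'm) monoid_scheme \<Rightarrow> 'a set \<Rightarrow> ('g \<Rightarrow> 'a \<Rightarrow> 'a) \<Rightarrow> 'a rel \<Rightarrow> 'g rel" where
  "N_rel G X act R = {(g, h). g \<in> carrier G \<and> h \<in> carrier G \<and> (\<forall>x\<in>X. (act g x, act h x) \<in> R)}"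

end

theory Submission
  imports Defs
begin

text \<open>For a \<open>G\<close>-invariant equivalence \<open>R\<close>, if \<open>(g, h) \<in> N\<^sub>R\<close> and \<open>(x, y) \<in> R\<close> then
  \<open>g x R g y\<close> by invariance and \<open>g y R h y\<close> by definition of \<open>N\<^sub>R\<close>, so \<open>g x R h y\<close> by transitivity.
  Since the \<open>R\<close> are a fundamental system of \<open>\<Gamma>\<close> and the \<open>N\<^sub>R \<times> R\<close> are product entourages,
  this is uniform continuity of the action.\<close>

lemma generated_uniformity_basis:
  assumes "W \<in> B" and "W \<subseteq> X \<times> X"
  shows "W \<in> generated_uniformity X B"
  using assms unfolding generated_uniformity_def by blast

lemma product_entourage_in_product_uniformity:
  assumes "WA \<in> UA" "WB \<in> UB" "WA \<subseteq> A \<times> A" "WB \<subseteq> B \<times> B"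
  shows "{((a, b), (a', b')). (a, a') \<in> WA \<and> (b, b') \<in> WB} \<in> product_uniformity UA UB A B"
proof -
  let ?W = "{((a, b), (a', b')). (a, a') \<in> WA \<and> (b, b') \<in> WB}"
  have "?W \<subseteq> (A \<times> B) \<times> (A \<times> B)"
    using assms(3,4) by auto
  moreover have "?W \<in> {{((a, b), (a', b')). (a, a') \<in> WA \<and> (b, b') \<in> WB} | WA WB. WA \<in> UA \<and> WB \<in> UB}"
    using assms(1,2) by blast
  ultimately show ?thesis
    unfolding product_uniformity_def by (intro generated_uniformity_basis)
qed

lemma N_rel_subset: "N_rel G X act R \<subseteq> carrier G \<times> carrier G"
  unfolding N_rel_def by auto

lemma act_pair_in_invariant_relation:
  assumes "G_invariant G act R" and "trans R"
    and "(g, h) \<in> N_rel G X act R" and "(x, y) \<in> R" and "y \<in> X"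
  shows "(act g x, act h y) \<in> R"
proof -
  have "g \<in> carrier G" using assms(3) unfolding N_rel_def by blast
  then have "(act g x, act g y) \<in> R"
    using assms(1,4) unfolding G_invariant_def by blast
  moreover have "(act g y, act h y) \<in> R"
    using assms(3,5) unfolding N_rel_def by blast
  ultimately show ?thesis by (rule transD[OF assms(2)])
qed

theorem mainTheorem7:
  fixes G :: "('g, 'm) monoid_scheme"
    and X V :: "'a set"
    and s t bar :: "'a \<Rightarrow> 'a"
    and U :: "'a rel set"
    and act :: "'g \<Rightarrow> 'a \<Rightarrow> 'a"
    and I :: "'a rel set"
  assumes "group G"
    and "cofinite_graph X V s t bar U"
    and "graph_action G X V s t bar act"
    and "uniformly_equicontinuous G U act"
    and "fundamental_system U I"
    and "\<forall>R\<in>I. G_invariant G act R \<and> compatible X V s t bar R \<and> cofinite_entourage X U R"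
  shows "uniformly_continuous_map
           (carrier G \<times> X)
           (product_uniformity (generated_uniformity (carrier G) {N_rel G X act R | R. R \<in> I}) U
              (carrier G) X)
           X U (\<lambda>(g, x). act g x)"
proof -
  let ?UG = "generated_uniformity (carrier G) {N_rel G X act R | R. R \<in> I}"
  have "group_action G X act" using assms(3) unfolding graph_action_def by blast
  then have maps_into: "(\<lambda>(g, x). act g x) ` (carrier G \<times> X) \<subseteq> X"
    using group_action.element_image by fastforce
  have "\<exists>W'\<in>product_uniformity ?UG U (carrier G) X. \<forall>((g, x), (h, y))\<in>W'. (act g x, act h y) \<in> W"
    if "W \<in> U" for W
  proof -
    obtain R where R: "R \<in> I" "R \<subseteq> W" "R \<in> U"
      using assms(5) \<open>W \<in> U\<close> unfolding fundamental_system_def by blast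
    have inv: "G_invariant G act R" and eqv: "equiv X R"
      using assms(6) R(1) unfolding cofinite_entourage_def by auto
    have RX: "R \<subseteq> X \<times> X" using eqv by (rule equiv_type)
    have "trans R" using eqv by (rule equivE)
    let ?E = "{((g, x), (h, y)). (g, h) \<in> N_rel G X act R \<and> (x, y) \<in> R}"
    have "N_rel G X act R \<in> ?UG"
      using R(1) N_rel_subset by (blast intro: generated_uniformity_basis)
    then have "?E \<in> product_uniformity ?UG U (carrier G) X"
      using R(3) N_rel_subset RX by (rule product_entourage_in_product_uniformity)
    moreover have "(act g x, act h y) \<in> W" if "(g, h) \<in> N_rel G X act R" "(x, y) \<in> R" for g h x y
    proof -
      have "y \<in> X" using RX that(2) by blast
      with act_pair_in_invariant_relation[OF inv \<open>trans R\<close> that]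
      show ?thesis using R(2) by blast
    qed
    ultimately show ?thesis by (intro bexI[where x = ?E]) auto
  qed
  then show ?thesis
    unfolding uniformly_continuous_map_def using maps_into by fastforce
qed

end
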